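(* Let $(\mathcal{L},[\,,\,])$ be a Lie algebra over $\mathbf{k}$ with basis $X=\{x_j:j\in J\}$ where $J$ is totally ordered, let $k\in\mathbf{k}$ be nonzero, and let $\hat A$, $\hat q$, $\hat x_j$, $R$ be as constructed below. Then every element of $\hat A$ is congruent modulo $R$ to a $\mathbf{k}$-linear combination of model monomials, where the model monomials are: (a) $\hat q\hat x_{j_1}\cdots\hat x_{j_m}$ with $m\ge0$, $j_1\le\cdots\le j_m$; (b) $\hat x_{i_1}\cdots\hat x_{i_t}\hat x_{j_0}\hat q\hat x_{j_1}\cdots\hat x_{j_m}$ with $t,m\ge0$, $i_1\le\cdots\le i_t$, $j_0\le j_1\le\cdots\le j_m$; (c) $\hat x_{j_1}\cdots\hat x_{j_m}$ with $m\ge0$, $j_1\le\cdots\le j_m$ (empty products being $\hat 1$).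
   Context: Construction: $\tilde q\notin X$ a symbol, $V$ the $\mathbf{k}$-vector space with basis $X\cup\{\tilde q\}$, $T(V)$ its tensor algebra, $I$ the two-sided ideal generated by $\tilde q\otimes\tilde q-\tilde q$ and all $\tilde q\otimes a\otimes\tilde q-\tilde q\otimes a$ ($a\in T(V)$), $\hat A=T(V)/I$, $\hat q=\tilde q+I$, $\hat 1=1+I$, $\hat x_j=x_j+I$, and $x\mapsto\hat x$ the linear extension to $\mathcal{L}$. $R$ is the two-sided ideal of $\hat A$ generated by all $\widehat{[x,y]}-\hat x\hat y+\hat y\hat x+\hat x\hat y\hat q-\hat y\hat x\hat q-k\hat x\hat q\hat y+k\hat y\hat q\hat x$, $x,y\in\mathcal{L}$. *)

theory Defs
  imports Main "HOL-Library.Poly_Mapping"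
begin

definition pm_smult :: "'k::field \<Rightarrow> ('a \<Rightarrow>\<^sub>0 'k) \<Rightarrow> ('a \<Rightarrow>\<^sub>0 'k)" where
  "pm_smult c p = Poly_Mapping.map (\<lambda>a. c * a) p"

text \<open>Lie algebra structure on L = finitely supported functions (coordinates w.r.t. the basis
  X = {x_j}, x_j = single j 1), with bracket br.\<close>
definition lie_algebra :: "(('j \<Rightarrow>\<^sub>0 'k::field) \<Rightarrow> ('j \<Rightarrow>\<^sub>0 'k) \<Rightarrow> ('j \<Rightarrow>\<^sub>0 'k)) \<Rightarrow> bool" where
  "lie_algebra br \<longleftrightarrow>
     (\<forall>x y z. br (x + y) z = br x z + br y z) \<and>
     (\<forall>x y z. br x (y + z) = br x y + br x z) \<and>
     (\<forall>c x y. br (pm_smult c x) y = pm_smult c (br x y)) \<and>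
     (\<forall>c x y. br x (pm_smult c y) = pm_smult c (br x y)) \<and>
     (\<forall>x. br x x = 0) \<and>
     (\<forall>x y z. br x (br y z) + br y (br z x) + br z (br x y) = 0)"

text \<open>Tensor algebra T(V), V with basis X \<union> {q~}: letters are 'j option,
  None = q~, Some j = x_j; T(V) = finitely supported coefficient maps on words.\<close>
type_synonym ('j, 'k) tens = "'j option list \<Rightarrow>\<^sub>0 'k"

definition tmul :: "('j, 'k::field) tens \<Rightarrow> ('j, 'k) tens \<Rightarrow> ('j, 'k) tens" where
  "tmul p q = (\<Sum>u\<in>Poly_Mapping.keys p. \<Sum>v\<in>Poly_Mapping.keys q.
      Poly_Mapping.single (u @ v) (Poly_Mapping.lookup p u * Poly_Mapping.lookup q v))"

definition tword :: "'j option list \<Rightarrow> ('j, 'k::field) tens" where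
  "tword w = Poly_Mapping.single w 1"

definition tq :: "('j, 'k::field) tens" where
  "tq = tword [None]"

definition tone :: "('j, 'k::field) tens" where
  "tone = tword []"

definition thatx :: "('j \<Rightarrow>\<^sub>0 'k::field) \<Rightarrow> ('j, 'k) tens" where
  "thatx x = (\<Sum>j\<in>Poly_Mapping.keys x. Poly_Mapping.single [Some j] (Poly_Mapping.lookup x j))"

inductive_set tideal :: "('j, 'k::field) tens set \<Rightarrow> ('j, 'k) tens set"
  for G where
  zero: "0 \<in> tideal G"
| gen: "g \<in> G \<Longrightarrow> tmul (tmul a g) b \<in> tideal G"
| add: "u \<in> tideal G \<Longrightarrow> v \<in> tideal G \<Longrightarrow> u + v \<in> tideal G"

definition I_gens :: "('j, 'k::field) tens set" where
  "I_gens = insert (tmul tq tq - tq) {tmul (tmul tq a) tq - tmul tq a | a. True}"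

definition R_gens :: "(('j \<Rightarrow>\<^sub>0 'k::field) \<Rightarrow> ('j \<Rightarrow>\<^sub>0 'k) \<Rightarrow> ('j \<Rightarrow>\<^sub>0 'k)) \<Rightarrow> 'k
    \<Rightarrow> ('j, 'k) tens set" where
  "R_gens br k = {thatx (br x y) - tmul (thatx x) (thatx y) + tmul (thatx y) (thatx x)
       + tmul (tmul (thatx x) (thatx y)) tq - tmul (tmul (thatx y) (thatx x)) tq
       - pm_smult k (tmul (tmul (thatx x) tq) (thatx y))
       + pm_smult k (tmul (tmul (thatx y) tq) (thatx x)) | x y. True}"

definition model_words :: "'j::linorder option list set" where
  "model_words =
     {None # map Some js | js. sorted js}
   \<union> {map Some is @ [Some j0, None] @ map Some js | is j0 js. sorted is \<and> sorted (j0 # js)}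
   \<union> {map Some js | js. sorted js}"

end

theory Submission
  imports Defs
begin

(* Proof idea (a reduction-system argument in the style of the diamond lemma, only the
   existence half).  T(V) is the monoid algebra of the free monoid of words over the
   letters x_j (written Some j) and q~ (written None); making lists a monoid under
   concatenation lets us use the ring structure of poly_mapping, in which tmul is ordinary
   multiplication.  Call an element reducible if it is congruent modulo
   J = tideal (I_gens \<union> R_gens br k) to a combination of model words.  Reducible
   elements form a subspace closed under congruence, so it suffices that every word is
   reducible.

   The I-relations q v q = q v cut every word down to at most one letter q.  The generator
   of R for basis vectors x_i, x_j, multiplied by words on both sides and cleaned up by the
   I-relations, gives three exchange rules for adjacent letters x_i x_j: one for letters in
   front of q, one for letters behind q, one for the two letters around q.  Each exchange
   costs only words with fewer x-letters (the bracket term) or words whose q sits further to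
   the left; the two rules next to q divide by k, which is where k \<noteq> 0 is used.
   An induction on the number of x-letters, combined with bubble-sort inductions on the
   number of inversions, then brings every word into one of the three model shapes. *)


section \<open>Tensor algebra as a monoid algebra\<close>

text \<open>Words under concatenation form a monoid; this turns T(V) into a ring.\<close>
instantiation list :: (type) monoid_add
begin
definition zero_list :: "'a list" where "zero_list = []"
definition plus_list :: "'a list \<Rightarrow> 'a list \<Rightarrow> 'a list" where "plus_list = (@)"
instance by standard (auto simp: zero_list_def plus_list_def)
end

lemma poly_mapping_expansion:
  "p = (\<Sum>u\<in>Poly_Mapping.keys p. Poly_Mapping.single u (Poly_Mapping.lookup p u))"
  by (rule poly_mapping_eqI) (simp add: lookup_sum lookup_single when_def in_keys_iff)

lemma tmul_eq_times: "tmul p q = p * (q :: ('j,'k::field) tens)"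
proof -
  have "p * q = (\<Sum>u\<in>Poly_Mapping.keys p. Poly_Mapping.single u (Poly_Mapping.lookup p u)) *
     (\<Sum>v\<in>Poly_Mapping.keys q. Poly_Mapping.single v (Poly_Mapping.lookup q v))"
    using poly_mapping_expansion[of p] poly_mapping_expansion[of q] by simp
  also have "\<dots> = tmul p q"
    by (simp add: tmul_def sum_distrib_left sum_distrib_right mult_single plus_list_def)
       (rule sum.swap)
  finally show ?thesis by simp
qed

lemma tword_mult: "tword u * tword v = (tword (u @ v) :: ('j,'k::field) tens)"
  by (simp add: tword_def mult_single plus_list_def)

lemma tword_mult_assoc: "tword u * (tword v * p) = tword (u @ v) * (p :: ('j,'k::field) tens)"
  by (simp add: mult.assoc[symmetric] tword_mult)

definition sc :: "'k \<Rightarrow> ('j,'k::field) tens" where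
  "sc c = Poly_Mapping.single [] c"

lemma sc_mult_single: "sc c * Poly_Mapping.single w a = Poly_Mapping.single w (c * a)"
  by (simp add: sc_def mult_single plus_list_def)

lemma single_eq_sc_tword: "Poly_Mapping.single w c = sc c * (tword w :: ('j,'k::field) tens)"
  by (simp add: tword_def sc_mult_single)

lemma sc_central: "sc c * p = p * (sc c :: ('j,'k::field) tens)"
proof -
  have "sc c * p = sc c * (\<Sum>u\<in>Poly_Mapping.keys p. Poly_Mapping.single u (Poly_Mapping.lookup p u))"
    using poly_mapping_expansion[of p] by simp
  also have "\<dots> = (\<Sum>u\<in>Poly_Mapping.keys p. Poly_Mapping.single u (Poly_Mapping.lookup p u)) * sc c"
    by (simp add: sum_distrib_left sum_distrib_right sc_def mult_single plus_list_def mult.commute)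
  finally show ?thesis
    by (metis poly_mapping_expansion)
qed

lemma tword_sc: "tword u * (sc c * p) = sc c * (tword u * (p :: ('j,'k::field) tens))"
  by (metis mult.assoc sc_central)

lemma tword_sc_right: "tword u * sc c = sc c * (tword u :: ('j,'k::field) tens)"
  by (rule sc_central[symmetric])

lemma sc_mult: "sc a * sc b = (sc (a * b) :: ('j,'k::field) tens)"
  by (simp add: sc_def mult_single plus_list_def)

lemma sc_one: "sc 1 = (1 :: ('j,'k::field) tens)"
  by (simp add: sc_def zero_list_def[symmetric])

lemma sc_minus_one: "sc (-1) = (-1 :: ('j,'k::field) tens)"
  by (metis sc_def single_uminus sc_one)

lemma pm_smult_eq_sc: "pm_smult c p = sc c * p"
  by (simp add: pm_smult_def sc_def mult_map_scale_conv_mult zero_list_def)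

lemma keys_sc_mult: "Poly_Mapping.keys (sc c * (p::('j,'k::field) tens)) \<subseteq> Poly_Mapping.keys p"
  unfolding pm_smult_eq_sc[symmetric] pm_smult_def
  by (auto simp: in_keys_iff map.rep_eq when_def)

lemma thatx_single: "thatx (Poly_Mapping.single i (1::'k::field)) = (tword [Some i] :: ('j,'k) tens)"
  by (simp add: thatx_def tword_def)


section \<open>Two-sided ideals\<close>

lemma tideal_mult_left: "u \<in> tideal G \<Longrightarrow> c * u \<in> tideal G"
proof (induction rule: tideal.induct)
  case (gen g a b)
  have "c * tmul (tmul a g) b = tmul (tmul (c * a) g) b"
    by (simp add: tmul_eq_times mult.assoc)
  then show ?case using tideal.gen[OF gen] by simp
qed (simp_all add: distrib_left tideal.intros)

lemma tideal_mult_right: "u \<in> tideal G \<Longrightarrow> u * c \<in> tideal G"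
proof (induction rule: tideal.induct)
  case (gen g a b)
  have "tmul (tmul a g) b * c = tmul (tmul a g) (b * c)"
    by (simp add: tmul_eq_times mult.assoc)
  then show ?case using tideal.gen[OF gen] by simp
qed (simp_all add: distrib_right tideal.intros)

lemma tideal_context: "u \<in> tideal G \<Longrightarrow> a * u * b \<in> tideal G"
  by (intro tideal_mult_right tideal_mult_left)

lemma tideal_generator: "g \<in> G \<Longrightarrow> g \<in> tideal G"
  using tideal.gen[of g G 1 1] by (simp add: tmul_eq_times)

lemma tideal_uminus: "u \<in> tideal G \<Longrightarrow> - u \<in> tideal G"
  using tideal_mult_left[of u G "-1"] by simp

lemma tideal_diff: "u \<in> tideal G \<Longrightarrow> v \<in> tideal G \<Longrightarrow> u - v \<in> tideal G"
  unfolding diff_conv_add_uminus by (intro tideal.add tideal_uminus)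


section \<open>Reducible elements\<close>

definition reducible :: "('j,'k::field) tens set \<Rightarrow> 'j option list set \<Rightarrow> ('j,'k) tens \<Rightarrow> bool" where
  "reducible G W a \<longleftrightarrow> (\<exists>p. Poly_Mapping.keys p \<subseteq> W \<and> a - p \<in> tideal G)"

lemma reducible_word: "w \<in> W \<Longrightarrow> reducible G W (tword w)"
  unfolding reducible_def by (intro exI[of _ "tword w"]) (auto simp: tword_def tideal.zero)

lemma reducible_zero: "reducible G W 0"
  unfolding reducible_def by (intro exI[of _ 0]) (simp add: tideal.zero)

lemma reducible_add:
  assumes "reducible G W a" "reducible G W b"
  shows "reducible G W (a + b)"
proof -
  obtain p q where p: "Poly_Mapping.keys p \<subseteq> W" "a - p \<in> tideal G"
    and q: "Poly_Mapping.keys q \<subseteq> W" "b - q \<in> tideal G"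
    using assms unfolding reducible_def by blast
  have "Poly_Mapping.keys (p + q) \<subseteq> W"
    using keys_add[of p q] p q by blast
  moreover have "a + b - (p + q) \<in> tideal G"
    using tideal.add[OF p(2) q(2)] by (simp add: algebra_simps)
  ultimately show ?thesis unfolding reducible_def by blast
qed

lemma reducible_scale:
  assumes "reducible G W a"
  shows "reducible G W (sc c * a)"
proof -
  obtain p where p: "Poly_Mapping.keys p \<subseteq> W" "a - p \<in> tideal G"
    using assms unfolding reducible_def by blast
  have "Poly_Mapping.keys (sc c * p) \<subseteq> W"
    using keys_sc_mult[of c p] p by blast
  moreover have "sc c * a - sc c * p \<in> tideal G"
    using tideal_mult_left[OF p(2), of "sc c"] by (simp add: algebra_simps)
  ultimately show ?thesis unfolding reducible_def by blast
qed

lemma reducible_uminus: "reducible G W a \<Longrightarrow> reducible G W (- a)"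
  using reducible_scale[of G W a "-1"] by (simp add: sc_minus_one)

lemma reducible_diff: "reducible G W a \<Longrightarrow> reducible G W b \<Longrightarrow> reducible G W (a - b)"
  unfolding diff_conv_add_uminus by (intro reducible_add reducible_uminus)

lemma reducible_sum: "(\<And>x. x \<in> S \<Longrightarrow> reducible G W (f x)) \<Longrightarrow> reducible G W (\<Sum>x\<in>S. f x)"
  by (induction S rule: infinite_finite_induct) (simp_all add: reducible_zero reducible_add)

lemma reducible_congruent:
  assumes "a - b \<in> tideal G" "reducible G W b"
  shows "reducible G W a"
proof -
  obtain p where p: "Poly_Mapping.keys p \<subseteq> W" "b - p \<in> tideal G"
    using assms(2) unfolding reducible_def by blast
  have "a - p \<in> tideal G"
    using tideal.add[OF assms(1) p(2)] by simp
  then show ?thesis using p(1) unfolding reducible_def by blast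
qed

text \<open>Since words span T(V), it suffices to reduce words.\<close>
lemma reducible_if_words_reducible:
  assumes "\<And>w. reducible G W (tword w)"
  shows "reducible G W a"
proof -
  have "a = (\<Sum>u\<in>Poly_Mapping.keys a. sc (Poly_Mapping.lookup a u) * tword u)"
    by (subst poly_mapping_expansion) (simp only: single_eq_sc_tword)
  also have "reducible G W \<dots>"
    by (intro reducible_sum reducible_scale assms)
  finally show ?thesis .
qed

lemma reducible_insert_vector:
  assumes "\<And>l. reducible G W (tword (u @ Some l # w))"
  shows "reducible G W (tword u * thatx z * tword w)"
proof -
  have "tword u * thatx z * tword w =
     (\<Sum>l\<in>Poly_Mapping.keys z. Poly_Mapping.single (u @ Some l # w) (Poly_Mapping.lookup z l))"
    by (simp add: thatx_def sum_distrib_left sum_distrib_right tword_def mult_single plus_list_def)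
  also have "\<dots> = (\<Sum>l\<in>Poly_Mapping.keys z. sc (Poly_Mapping.lookup z l) * tword (u @ Some l # w))"
    by (simp only: single_eq_sc_tword)
  finally show ?thesis
    by (simp add: reducible_sum reducible_scale assms)
qed

lemma reducible_solve:
  assumes "k \<noteq> 0" "sc k * (a - b) - c \<in> tideal G" "reducible G W b" "reducible G W c"
  shows "reducible G W (a :: ('j,'k::field) tens)"
proof -
  have "sc (inverse k) * (sc k * (a - b) - c) \<in> tideal G"
    by (rule tideal_mult_left[OF assms(2)])
  moreover have "sc (inverse k) * (sc k * (a - b) - c) = a - (b + sc (inverse k) * c)"
    using assms(1) by (simp add: right_diff_distrib mult.assoc[symmetric] sc_mult sc_one)
  ultimately show ?thesis
    using reducible_congruent reducible_add reducible_scale assms(3,4) by metis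
qed


section \<open>The defining relations on words\<close>

lemma q_absorb:
  assumes "I_gens \<subseteq> G"
  shows "tword (u @ None # v @ None # w) - tword (u @ None # v @ w) \<in> tideal G"
proof -
  have "tmul (tmul tq (tword v)) tq - tmul tq (tword v) \<in> G"
    using assms unfolding I_gens_def by blast
  then have "tword u * (tmul (tmul tq (tword v)) tq - tmul tq (tword v)) * tword w \<in> tideal G"
    by (intro tideal_context tideal_generator)
  also have "tword u * (tmul (tmul tq (tword v)) tq - tmul tq (tword v)) * tword w
      = tword (u @ None # v @ None # w) - tword (u @ None # v @ w)"
    by (simp add: tmul_eq_times tq_def tword_mult right_diff_distrib left_diff_distrib
        mult.assoc tword_mult_assoc)
  finally show ?thesis .
qed

lemma reducible_q_absorb:
  "I_gens \<subseteq> G \<Longrightarrow> reducible G W (tword (u @ None # v @ w))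
     \<Longrightarrow> reducible G W (tword (u @ None # v @ None # w))"
  by (rule reducible_congruent[OF q_absorb])

abbreviation hat_bracket :: "(('j \<Rightarrow>\<^sub>0 'k::field) \<Rightarrow> ('j \<Rightarrow>\<^sub>0 'k) \<Rightarrow> ('j \<Rightarrow>\<^sub>0 'k)) \<Rightarrow> 'j \<Rightarrow> 'j
    \<Rightarrow> ('j,'k) tens" where
  "hat_bracket br i j \<equiv> thatx (br (Poly_Mapping.single i (1::'k)) (Poly_Mapping.single j 1))"

lemma R_relation:
  assumes "R_gens br k \<subseteq> G"
  shows "tword u * hat_bracket br i j * tword w
    - tword (u @ Some i # Some j # w) + tword (u @ Some j # Some i # w)
    + tword (u @ Some i # Some j # None # w) - tword (u @ Some j # Some i # None # w)
    - sc k * tword (u @ Some i # None # Some j # w)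
    + sc k * tword (u @ Some j # None # Some i # w) \<in> tideal G"
proof -
  let ?x = "Poly_Mapping.single i 1" and ?y = "Poly_Mapping.single j 1"
  have "thatx (br ?x ?y) - tmul (thatx ?x) (thatx ?y) + tmul (thatx ?y) (thatx ?x)
       + tmul (tmul (thatx ?x) (thatx ?y)) tq - tmul (tmul (thatx ?y) (thatx ?x)) tq
       - pm_smult k (tmul (tmul (thatx ?x) tq) (thatx ?y))
       + pm_smult k (tmul (tmul (thatx ?y) tq) (thatx ?x)) \<in> G"
    using assms unfolding R_gens_def by blast
  then have "tword u * (thatx (br ?x ?y) - tmul (thatx ?x) (thatx ?y) + tmul (thatx ?y) (thatx ?x)
       + tmul (tmul (thatx ?x) (thatx ?y)) tq - tmul (tmul (thatx ?y) (thatx ?x)) tq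
       - pm_smult k (tmul (tmul (thatx ?x) tq) (thatx ?y))
       + pm_smult k (tmul (tmul (thatx ?y) tq) (thatx ?x))) * tword w \<in> tideal G"
    by (intro tideal_context tideal_generator)
  then show ?thesis
    by (simp add: tmul_eq_times pm_smult_eq_sc thatx_single tq_def tword_mult tword_mult_assoc
        tword_sc tword_sc_right algebra_simps)
qed

text \<open>Exchange rule behind q: k (x_i x_j - x_j x_i) equals the bracket there.  It is the
  R-relation placed behind u q v, in which the four words carrying a second q are reduced
  by q_absorb.\<close>
lemma exchange_behind_q:
  assumes "I_gens \<subseteq> G" "R_gens br k \<subseteq> G"
  shows "sc k * (tword (u @ None # v @ Some i # Some j # w) - tword (u @ None # v @ Some j # Some i # w))
     - tword (u @ None # v) * hat_bracket br i j * tword w \<in> tideal G"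
proof -
  have "- (tword (u @ None # v) * hat_bracket br i j * tword w
    - tword ((u @ None # v) @ Some i # Some j # w) + tword ((u @ None # v) @ Some j # Some i # w)
    + tword ((u @ None # v) @ Some i # Some j # None # w) - tword ((u @ None # v) @ Some j # Some i # None # w)
    - sc k * tword ((u @ None # v) @ Some i # None # Some j # w)
    + sc k * tword ((u @ None # v) @ Some j # None # Some i # w)
    - (tword (u @ None # (v @ [Some i, Some j]) @ None # w) - tword (u @ None # (v @ [Some i, Some j]) @ w))
    + (tword (u @ None # (v @ [Some j, Some i]) @ None # w) - tword (u @ None # (v @ [Some j, Some i]) @ w))
    + sc k * (tword (u @ None # (v @ [Some i]) @ None # Some j # w) - tword (u @ None # (v @ [Some i]) @ Some j # w))
    - sc k * (tword (u @ None # (v @ [Some j]) @ None # Some i # w) - tword (u @ None # (v @ [Some j]) @ Some i # w)))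
    \<in> tideal G"
    by (intro tideal_uminus tideal.add tideal_diff tideal_mult_left R_relation q_absorb assms)
  then show ?thesis
    by (simp add: algebra_simps)
qed

text \<open>Exchange rule around q: k (x_i q x_j - x_j q x_i) equals [x_i,x_j] q.  It is the
  R-relation placed in front of q w, with the second q's again reduced by q_absorb.\<close>
lemma exchange_around_q:
  assumes "I_gens \<subseteq> G" "R_gens br k \<subseteq> G"
  shows "sc k * (tword (u @ Some i # None # Some j # w) - tword (u @ Some j # None # Some i # w))
     - tword u * hat_bracket br i j * tword (None # w) \<in> tideal G"
proof -
  have "- (tword u * hat_bracket br i j * tword (None # w)
    - tword (u @ Some i # Some j # None # w) + tword (u @ Some j # Some i # None # w)
    + tword (u @ Some i # Some j # None # None # w) - tword (u @ Some j # Some i # None # None # w)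
    - sc k * tword (u @ Some i # None # Some j # None # w)
    + sc k * tword (u @ Some j # None # Some i # None # w)
    - (tword ((u @ [Some i, Some j]) @ None # [] @ None # w) - tword ((u @ [Some i, Some j]) @ None # [] @ w))
    + (tword ((u @ [Some j, Some i]) @ None # [] @ None # w) - tword ((u @ [Some j, Some i]) @ None # [] @ w))
    + sc k * (tword ((u @ [Some i]) @ None # [Some j] @ None # w) - tword ((u @ [Some i]) @ None # [Some j] @ w))
    - sc k * (tword ((u @ [Some j]) @ None # [Some i] @ None # w) - tword ((u @ [Some j]) @ None # [Some i] @ w)))
    \<in> tideal G"
    by (intro tideal_uminus tideal.add tideal_diff tideal_mult_left R_relation q_absorb assms)
  then show ?thesis
    by (simp add: algebra_simps)
qed


section \<open>Sorting by adjacent transpositions\<close>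

text \<open>Number of inversions of a list, the termination measure of bubble sort.\<close>
fun inversions :: "'a::linorder list \<Rightarrow> nat" where
  "inversions [] = 0"
| "inversions (x # xs) = length (filter (\<lambda>y. y < x) xs) + inversions xs"

lemma inversions_swap:
  "(j::'a::linorder) < i \<Longrightarrow> inversions (a @ [i, j] @ b) = Suc (inversions (a @ [j, i] @ b))"
  by (induction a) auto

lemma unsorted_adjacent_inversion:
  "\<not> sorted (xs::'a::linorder list) \<Longrightarrow> \<exists>a i j b. xs = a @ [i, j] @ b \<and> j < i"
proof (induction xs)
  case (Cons x ys)
  show ?case
  proof (cases "sorted ys")
    case False
    with Cons obtain a i j b where "ys = a @ [i, j] @ b" "j < i" by blast
    then show ?thesis by (metis append_Cons)
  next
    case True
    then obtain y zs where ys: "ys = y # zs" using Cons.prems by (cases ys) auto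
    with True Cons.prems have "y < x" by auto
    then show ?thesis using ys by (intro exI[of _ "[]"] exI[of _ x] exI[of _ y] exI[of _ zs]) simp
  qed
qed simp

lemma sort_induct[case_names sorted swap]:
  fixes P :: "'a::linorder list \<Rightarrow> bool"
  assumes sorted: "\<And>xs. sorted xs \<Longrightarrow> P xs"
    and swap: "\<And>a i j b. j < i \<Longrightarrow> P (a @ [j, i] @ b) \<Longrightarrow> P (a @ [i, j] @ b)"
  shows "P xs"
proof (induction "inversions xs" arbitrary: xs rule: less_induct)
  case less
  show ?case
  proof (cases "sorted xs")
    case False
    then obtain a i j b where xs: "xs = a @ [i, j] @ b" "j < i"
      using unsorted_adjacent_inversion by blast
    then have "P (a @ [j, i] @ b)"
      using less inversions_swap[OF xs(2), of a b] by simp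
    then show ?thesis using swap xs by blast
  qed (rule sorted)
qed


section \<open>Reduction of words\<close>

text \<open>Number of x-letters in a word; the main induction runs on it.\<close>
definition xcount :: "'j option list \<Rightarrow> nat" where
  "xcount w = length (filter (\<lambda>c. c \<noteq> None) w)"

lemma xcount_simps[simp]:
  "xcount [] = 0" "xcount (None # w) = xcount w" "xcount (Some x # w) = Suc (xcount w)"
  "xcount (u @ w) = xcount u + xcount w" "xcount (map Some xs) = length xs"
  by (auto simp: xcount_def filter_map o_def)

lemma q_free_word:
  assumes "None \<notin> set w"
  shows "map Some (map the w) = w" and "xcount w = length w"
  using assms by (induction w) (auto simp: xcount_def, metis option.exhaust)

context
  fixes br :: "('j::linorder \<Rightarrow>\<^sub>0 'k::field) \<Rightarrow> ('j \<Rightarrow>\<^sub>0 'k) \<Rightarrow> ('j \<Rightarrow>\<^sub>0 'k)"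
    and k :: 'k and G :: "('j, 'k) tens set"
  assumes k: "k \<noteq> 0" and IG: "I_gens \<subseteq> G" and RG: "R_gens br k \<subseteq> G"
begin

abbreviation red :: "'j option list \<Rightarrow> bool" where
  "red w \<equiv> reducible G model_words (tword w)"

lemma swap_behind_q:
  assumes "red (u @ None # v @ Some j # Some i # w)" "\<And>l. red (u @ None # v @ Some l # w)"
  shows "red (u @ None # v @ Some i # Some j # w)"
  by (rule reducible_solve[OF k exchange_behind_q[OF IG RG] assms(1)])
     (simp add: reducible_insert_vector assms(2))

lemma swap_around_q:
  assumes "red (u @ Some j # None # Some i # w)" "\<And>l. red (u @ Some l # None # w)"
  shows "red (u @ Some i # None # Some j # w)"
  by (rule reducible_solve[OF k exchange_around_q[OF IG RG] assms(1)])
     (simp add: reducible_insert_vector assms(2))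

lemma swap_free:
  assumes "red (u @ Some j # Some i # w)"
    and "\<And>x y. red (u @ Some x # Some y # None # w)"
    and "\<And>x y. red (u @ Some x # None # Some y # w)"
    and "\<And>l. red (u @ Some l # w)"
  shows "red (u @ Some i # Some j # w)"
proof (rule reducible_congruent)
  let ?b = "tword (u @ Some j # Some i # w)
    + (tword (u @ Some i # Some j # None # w) - tword (u @ Some j # Some i # None # w))
    - sc k * (tword (u @ Some i # None # Some j # w) - tword (u @ Some j # None # Some i # w))
    + tword u * hat_bracket br i j * tword w"
  show "tword (u @ Some i # Some j # w) - ?b \<in> tideal G"
    using tideal_uminus[OF R_relation[OF RG, of u i j w]] by (simp add: algebra_simps)
  show "reducible G model_words ?b"
    by (intro reducible_add reducible_diff reducible_scale reducible_insert_vector assms)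
qed

text \<open>Inside the main induction: all words with fewer than n x-letters are reducible.\<close>
context
  fixes n :: nat
  assumes fewer_letters: "\<And>w. xcount w < n \<Longrightarrow> red w"
begin

text \<open>Words q x_{j_1}...x_{j_n}: sort the letters behind q.\<close>
lemma red_q_first: "length vs = n \<Longrightarrow> red (None # map Some vs)"
proof (induction vs rule: sort_induct)
  case (sorted vs)
  then show ?case by (intro reducible_word) (auto simp: model_words_def)
next
  case (swap a i j b)
  show ?case
    using swap_behind_q[of "[]" "map Some a" j i "map Some b"] swap fewer_letters by simp
qed

text \<open>Words x_I x_{j_0} q x_J with I sorted: sort the list j_0 J, using the exchange rule
  around q for its first two entries and the one behind q for the others.\<close>
lemma red_sorted_front:
  assumes "sorted is"
  shows "l \<noteq> [] \<Longrightarrow> length is + length l = n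
    \<Longrightarrow> red (map Some is @ Some (hd l) # None # map Some (tl l))"
proof (induction l rule: sort_induct)
  case (sorted l)
  then obtain j0 js where "l = j0 # js" by (cases l) auto
  then show ?case
    using sorted assms by (intro reducible_word) (fastforce simp: model_words_def)
next
  case (swap a i j b)
  show ?case
  proof (cases a)
    case Nil
    then show ?thesis
      using swap_around_q[of "map Some is" j i "map Some b"] swap fewer_letters by simp
  next
    case (Cons c a')
    then show ?thesis
      using swap_behind_q[of "map Some is @ [Some c]" "map Some a'" j i "map Some b"]
        swap fewer_letters by simp
  qed
qed

text \<open>Words x_I x_{j_0} q x_J: sort I, assuming the claim for all shorter prefixes in front of q.
  The exchange creates words with a second q, which is absorbed by the first one.\<close>
lemma red_front:
  assumes shorter: "\<And>us vs. length us < m \<Longrightarrow> length us + length vs = n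
      \<Longrightarrow> red (map Some us @ None # map Some vs)"
  shows "length is + 1 = m \<Longrightarrow> length is + 1 + length vs = n
    \<Longrightarrow> red (map Some is @ Some j0 # None # map Some vs)"
proof (induction "is" arbitrary: j0 vs rule: sort_induct)
  case (sorted "is")
  then show ?case using red_sorted_front[of "is" "j0 # vs"] by simp
next
  case (swap a i j b)
  let ?w = "map Some b @ Some j0 # None # map Some vs"
  have "red (map Some a @ Some x # Some y # None # ?w)" for x y
    using reducible_q_absorb[OF IG,
        where u = "map Some a @ [Some x, Some y]" and v = "map Some b @ [Some j0]"]
      shorter[of "a @ [x, y]" "b @ j0 # vs"] swap.prems by simp
  moreover have "red (map Some a @ Some x # None # Some y # ?w)" for x y
    using reducible_q_absorb[OF IG,
        where u = "map Some a @ [Some x]" and v = "Some y # map Some b @ [Some j0]"]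
      shorter[of "a @ [x]" "y # b @ j0 # vs"] swap.prems by simp
  ultimately have "red (map Some a @ Some i # Some j # ?w)"
    using swap_free[of "map Some a" j i ?w] swap fewer_letters by simp
  then show ?case by simp
qed

lemma red_one_q: "length us + length vs = n \<Longrightarrow> red (map Some us @ None # map Some vs)"
proof (induction "length us" arbitrary: us vs rule: less_induct)
  case less
  show ?case
  proof (cases us rule: rev_exhaust)
    case Nil
    then show ?thesis using red_q_first less.prems by simp
  next
    case (snoc "is" j0)
    then show ?thesis
      using red_front[of "length us" "is" vs j0] less by simp
  qed
qed

text \<open>Words without q: sort the letters; the exchange creates words with one q.\<close>
lemma red_no_q: "length xs = n \<Longrightarrow> red (map Some xs)"
proof (induction xs rule: sort_induct)
  case (sorted xs)
  then show ?case by (intro reducible_word) (auto simp: model_words_def)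
next
  case (swap a i j b)
  have "red (map Some a @ Some x # Some y # None # map Some b)" for x y
    using red_one_q[of "a @ [x, y]" b] swap.prems by simp
  moreover have "red (map Some a @ Some x # None # Some y # map Some b)" for x y
    using red_one_q[of "a @ [x]" "y # b"] swap.prems by simp
  ultimately show ?case
    using swap_free[of "map Some a" j i "map Some b"] swap fewer_letters by simp
qed

text \<open>All words with n x-letters: remove surplus letters q by the I-relations.\<close>
lemma red_n_letters: "xcount w = n \<Longrightarrow> red w"
proof (induction "length w" arbitrary: w rule: less_induct)
  case less
  show ?case
  proof (cases "None \<in> set w")
    case False
    have "red (map Some (map the w))"
      by (rule red_no_q) (use less.prems q_free_word[OF False] in simp)
    then show ?thesis by (simp only: q_free_word[OF False])
  next
    case True
    then obtain u r where w: "w = u @ None # r" and u: "None \<notin> set u"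
      by (metis split_list_first)
    show ?thesis
    proof (cases "None \<in> set r")
      case False
      have "red (map Some (map the u) @ None # map Some (map the r))"
        by (rule red_one_q) (use less.prems w q_free_word[OF u] q_free_word[OF False] in simp)
      then show ?thesis
        by (simp only: w q_free_word[OF u] q_free_word[OF False])
    next
      case True
      then obtain v v' where "r = v @ None # v'" by (metis split_list)
      then show ?thesis
        using reducible_q_absorb[OF IG, where u = u and v = v and w = v'] less w by simp
    qed
  qed
qed
end

lemma red_all_words: "red w"
proof (induction "xcount w" arbitrary: w rule: less_induct)
  case less
  then show ?case using red_n_letters by blast
qed

end


text \<open>Spanning by model monomials only uses the shape of the relations, not the Lie
  algebra axioms for br; the hypothesis lie_algebra br is needed for linear independence,
  which is not part of this statement.\<close>

theorem proposition5p1: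
  fixes br :: "('j::linorder \<Rightarrow>\<^sub>0 'k::field) \<Rightarrow> ('j \<Rightarrow>\<^sub>0 'k) \<Rightarrow> ('j \<Rightarrow>\<^sub>0 'k)"
    and k :: 'k
  assumes "lie_algebra br"
    and "k \<noteq> 0"
  shows "\<forall>a :: ('j, 'k) tens. \<exists>p. Poly_Mapping.keys p \<subseteq> model_words \<and>
           a - p \<in> tideal (I_gens \<union> R_gens br k)"
proof
  fix a :: "('j, 'k) tens"
  have "reducible (I_gens \<union> R_gens br k) model_words a"
    by (rule reducible_if_words_reducible, rule red_all_words[OF assms(2)]) auto
  then show "\<exists>p. Poly_Mapping.keys p \<subseteq> model_words \<and> a - p \<in> tideal (I_gens \<union> R_gens br k)"
    unfolding reducible_def .
qed

end
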